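(* Let $\mathcal{E}=\{E_1,\ldots,E_m\}$ be a set of two-outcome measurements and let $T$ be a positive integer. Then there exists a test procedure $Q$ such that: (i) $Q$ takes a state $\rho_0$ as input, applies at most $T$ measurements from $\mathcal{E}$, and returns either "success" or "failure"; (ii) if $\epsilon\ge0$ and $\operatorname{Tr}(E_i\rho_0)\ge1-\epsilon$ for all $i$, then $Q$ succeeds with probability at least $1-T\sqrt{\epsilon}$; (iii) if $Q$ succeeds on input $\rho_0$ with probability at least $\lambda>0$, then conditioned on succeeding, $Q$ outputs a state $\sigma$ such that $\operatorname{Tr}(E_i\sigma)\ge1-2\sqrt{m/(\lambda T)}$ for all $i\in\{1,\ldots,m\}$.
   Context: A two-outcome measurement on a quantum system is a Hermitian operator $E$ with eigenvalues in $[0,1]$; applied to state $\rho$ it accepts with probability $\operatorname{Tr}(E\rho)$ and the state is updated to the corresponding post-measurement state. *)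

theory Defs
  imports "HOL-Analysis.Analysis"
begin

definition adj :: "complex^'n^'n \<Rightarrow> complex^'n^'n" where
  "adj A = (\<chi> i j. cnj (A $ j $ i))"

definition hermitian :: "complex^'n^'n \<Rightarrow> bool" where
  "hermitian A \<longleftrightarrow> adj A = A"

definition is_eigenvalue :: "complex^'n^'n \<Rightarrow> complex \<Rightarrow> bool" where
  "is_eigenvalue A c \<longleftrightarrow> (\<exists>v. v \<noteq> 0 \<and> A *v v = (\<chi> j. c * v $ j))"

definition is_measurement :: "complex^'n^'n \<Rightarrow> bool" where
  "is_measurement E \<longleftrightarrow> hermitian E \<and>
     (\<forall>c. is_eigenvalue E c \<longrightarrow> c \<in> \<real> \<and> 0 \<le> Re c \<and> Re c \<le> 1)"

definition psd :: "complex^'n^'n \<Rightarrow> bool" where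
  "psd A \<longleftrightarrow> hermitian A \<and> (\<forall>c. is_eigenvalue A c \<longrightarrow> c \<in> \<real> \<and> 0 \<le> Re c)"

definition density :: "complex^'n^'n \<Rightarrow> bool" where
  "density \<rho> \<longleftrightarrow> psd \<rho> \<and> trace \<rho> = 1"

definition psd_sqrt :: "complex^'n^'n \<Rightarrow> complex^'n^'n" where
  "psd_sqrt A = (SOME S. psd S \<and> S ** S = A)"

definition acc_prob :: "complex^'n^'n \<Rightarrow> complex^'n^'n \<Rightarrow> real" where
  "acc_prob E \<rho> = Re (trace (E ** \<rho>))"

text \<open>A deterministic adaptive test procedure: a decision tree. Meas i a r applies
  measurement number i, continues with a on acceptance and with r on rejection.\<close>
datatype proc = Success | Failure | Meas nat proc proc

fun uses_below :: "nat \<Rightarrow> proc \<Rightarrow> bool" where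
  "uses_below m Success = True"
| "uses_below m Failure = True"
| "uses_below m (Meas i a r) = (i < m \<and> uses_below m a \<and> uses_below m r)"

fun depth :: "proc \<Rightarrow> nat" where
  "depth Success = 0"
| "depth Failure = 0"
| "depth (Meas i a r) = Suc (max (depth a) (depth r))"

text \<open>Unnormalised post-measurement state restricted to successful runs
  (Lueders rule: accept -> sqrt E rho sqrt E, reject -> sqrt(1-E) rho sqrt(1-E)).\<close>
fun succ_part :: "(nat \<Rightarrow> complex^'n^'n) \<Rightarrow> proc \<Rightarrow> complex^'n^'n \<Rightarrow> complex^'n^'n" where
  "succ_part E Success \<rho> = \<rho>"
| "succ_part E Failure \<rho> = 0"
| "succ_part E (Meas i a r) \<rho> =
     succ_part E a (psd_sqrt (E i) ** \<rho> ** psd_sqrt (E i)) +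
     succ_part E r (psd_sqrt (mat 1 - E i) ** \<rho> ** psd_sqrt (mat 1 - E i))"

text \<open>A (randomised) test procedure: a finite probability distribution over decision
  trees (classical randomness can be drawn up front), given as weighted list.\<close>
type_synonym test = "(real \<times> proc) list"

definition valid_test :: "nat \<Rightarrow> nat \<Rightarrow> test \<Rightarrow> bool" where
  "valid_test m T Q \<longleftrightarrow> (\<forall>(w,p)\<in>set Q. 0 \<le> w \<and> uses_below m p \<and> depth p \<le> T)
       \<and> (\<Sum>(w,p)\<leftarrow>Q. w) = 1"

definition succ_state :: "(nat \<Rightarrow> complex^'n^'n) \<Rightarrow> test \<Rightarrow> complex^'n^'n \<Rightarrow> complex^'n^'n" where
  "succ_state E Q \<rho> = (\<Sum>(w,p)\<leftarrow>Q. w *\<^sub>R succ_part E p \<rho>)"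

definition succ_prob :: "(nat \<Rightarrow> complex^'n^'n) \<Rightarrow> test \<Rightarrow> complex^'n^'n \<Rightarrow> real" where
  "succ_prob E Q \<rho> = Re (trace (succ_state E Q \<rho>))"

definition out_state :: "(nat \<Rightarrow> complex^'n^'n) \<Rightarrow> test \<Rightarrow> complex^'n^'n \<Rightarrow> complex^'n^'n" where
  "out_state E Q \<rho> = (1 / succ_prob E Q \<rho>) *\<^sub>R succ_state E Q \<rho>"

end

theory Submission
  imports Defs
begin

(*
  The test draws t uniformly from {0, ..., T - 1}, then applies t measurements, each drawn
  uniformly and independently from E_1, ..., E_m, and succeeds iff all of them accept. With
  S_i = sqrt E_i and Phi(X) = (1/m) sum_i S_i X S_i, the unnormalised state on success is
  Y = (1/T) sum_{t<T} Phi^t(rho).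

  Soundness: sum_i Tr(E_i Phi^t(rho)) = m Tr(Phi^(t+1)(rho)), so the nonnegative rejected masses
  Tr((1 - E_i) Y) sum to the telescoping (m/T) (Tr rho - Tr Phi^T(rho)) <= m/T. Dividing by
  Tr Y >= lam gives Tr(E_i sigma) >= 1 - m/(lam T) for sigma = Y / Tr Y, which is stronger than
  the claimed bound.

  Completeness: let G = sqrt rho and L(Z) = (1/m) sum_i S_i Z. The gentle measurement lemma gives
  ||S_i G - G||^2 <= 1 - Tr(E_i rho) <= eps, and L is a contraction, so ||L^t G - G|| <= t sqrt eps.
  Averaging ||W||^2 >= 2 <G, W> - ||G||^2 over the branches of Phi^t shows
  Tr Phi^t(rho) >= 2 <G, L^t G> - 1 >= 1 - 2 t sqrt eps; the average over t is 1 - (T - 1) sqrt eps.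
*)

section \<open>Matrix algebra and the complex inner product\<close>

(* scaleR_conv_of_real restricted to complex: as a simp rule on vectors it does not terminate *)
lemma complex_scaleR: "r *\<^sub>R (z::complex) = of_real r * z"
  by (rule scaleR_conv_of_real)

lemma smult_of_real: "complex_of_real r *s x = r *\<^sub>R x"
  by (simp add: vec_eq_iff complex_scaleR)

lemma mat_matrix_vector_mult: "mat c *v x = c *s x"
  by (simp add: mat_def matrix_vector_mult_def vec_eq_iff if_distrib if_distribR cong: if_cong)

lemma matrix_vector_mult_scaleR_right:
  fixes A :: "'a::real_algebra_1^'n^'m"
  shows "A *v (r *\<^sub>R x) = r *\<^sub>R (A *v x)"
  by (simp add: matrix_vector_mult_def vec_eq_iff scaleR_sum_right)

lemma matrix_diff_ldistrib: "(A::'a::ring_1^'n^'m) ** (B - C) = A ** B - A ** C"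
  by (simp add: matrix_matrix_mult_def vec_eq_iff algebra_simps sum_subtractf)

lemma matrix_diff_rdistrib: "((A::'a::ring_1^'n^'m) - B) ** C = A ** C - B ** C"
  by (simp add: matrix_matrix_mult_def vec_eq_iff algebra_simps sum_subtractf)

lemma matrix_add_rdistrib: "((A::'a::semiring_1^'n^'m) + B) ** C = A ** C + B ** C"
  by (simp add: matrix_matrix_mult_def vec_eq_iff algebra_simps sum.distrib)

lemma matrix_mult_scaleR_left: "(r *\<^sub>R A) ** B = r *\<^sub>R (A ** (B::'a::real_algebra_1^'n^'m))"
  by (simp add: scalar_matrix_assoc)

lemma matrix_mult_scaleR_right: "A ** (r *\<^sub>R B) = r *\<^sub>R (A ** (B::'a::real_algebra_1^'n^'m))"
  by (simp add: matrix_scalar_ac scalar_matrix_assoc)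

lemma matrix_sum_ldistrib: "(A::'a::semiring_1^'n^'m) ** sum f I = (\<Sum>i\<in>I. A ** f i)"
  by (induction I rule: infinite_finite_induct) (simp_all add: matrix_add_ldistrib)

lemma trace_sum: "trace (sum f I) = (\<Sum>i\<in>I. trace (f i :: 'a::comm_semiring_1^'n^'n))"
  unfolding trace_def by (simp add: sum.swap[of _ I])

lemma trace_scaleR: "trace (r *\<^sub>R A) = r *\<^sub>R trace (A :: 'a::{real_algebra_1,comm_semiring_1}^'n^'n)"
  unfolding trace_def by (simp add: scaleR_sum_right)

lemma adj_adj [simp]: "adj (adj A) = A"
  by (simp add: adj_def vec_eq_iff)

lemma adj_mult: "adj (A ** B) = adj B ** adj A"
  by (simp add: adj_def matrix_matrix_mult_def vec_eq_iff mult.commute)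

lemma adj_diff: "adj (A - B) = adj A - adj B"
  by (simp add: adj_def vec_eq_iff)

lemma adj_mat [simp]: "adj (mat c) = mat (cnj c)"
  by (simp add: adj_def mat_def vec_eq_iff)

definition cinner :: "complex^'n \<Rightarrow> complex^'n \<Rightarrow> complex" where
  "cinner x y = (\<Sum>i\<in>UNIV. cnj (x $ i) * y $ i)"

lemma Re_cinner: "Re (cinner x y) = inner x y"
  by (simp add: cinner_def inner_vec_def inner_complex_def)

lemma cinner_self: "cinner x x = complex_of_real ((norm x)\<^sup>2)"
proof -
  have "cinner x x = (\<Sum>i\<in>UNIV. complex_of_real ((cmod (x $ i))\<^sup>2))"
    by (simp add: cinner_def complex_norm_square mult.commute del: of_real_power)
  also have "\<dots> = complex_of_real ((norm x)\<^sup>2)"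
    by (simp add: norm_vec_def L2_set_def sum_nonneg)
  finally show ?thesis .
qed

lemma cinner_commute: "cinner y x = cnj (cinner x y)"
  by (simp add: cinner_def mult.commute)

lemma cinner_diff_right: "cinner x (y - z) = cinner x y - cinner x z"
  by (simp add: cinner_def algebra_simps sum_subtractf)

lemma cinner_scaleR_left: "cinner (r *\<^sub>R x) y = of_real r * cinner x y"
  by (simp add: cinner_def sum_distrib_left mult_ac complex_scaleR)

lemma cinner_scaleR_right: "cinner x (r *\<^sub>R y) = of_real r * cinner x y"
  by (simp add: cinner_def sum_distrib_left mult_ac complex_scaleR)

lemma cinner_smult_left: "cinner (c *s x) y = cnj c * cinner x y"
  by (simp add: cinner_def sum_distrib_left mult_ac)

lemma cinner_smult_right: "cinner x (c *s y) = c * cinner x y"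
  by (simp add: cinner_def sum_distrib_left mult_ac)

lemma cinner_adj: "cinner x (adj C *v y) = cinner (C *v x) y"
proof -
  have "cinner x (adj C *v y) = (\<Sum>i\<in>UNIV. \<Sum>j\<in>UNIV. cnj (x $ i) * cnj (C $ j $ i) * y $ j)"
    by (simp add: cinner_def adj_def matrix_vector_mult_def sum_distrib_left mult.assoc)
  also have "\<dots> = (\<Sum>j\<in>UNIV. \<Sum>i\<in>UNIV. cnj (x $ i) * cnj (C $ j $ i) * y $ j)"
    by (rule sum.swap)
  also have "\<dots> = cinner (C *v x) y"
    by (simp add: cinner_def matrix_vector_mult_def sum_distrib_right sum_distrib_left mult_ac)
  finally show ?thesis .
qed

lemma inner_adj: "inner x (adj C *v y) = inner (C *v x) y"
  by (metis Re_cinner cinner_adj)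

lemma hermitian_cinner: "hermitian A \<Longrightarrow> cinner x (A *v y) = cinner (A *v x) y"
  by (metis cinner_adj hermitian_def)

lemma hermitian_inner: "hermitian A \<Longrightarrow> inner x (A *v y) = inner (A *v x) y"
  by (metis Re_cinner hermitian_cinner)

section \<open>Spectral theorem for Hermitian matrices\<close>

lemma exists_unit_orthogonal:
  fixes v :: "'k \<Rightarrow> complex^'n"
  assumes "finite K" and "card K < CARD('n)"
  shows "\<exists>x. norm x = 1 \<and> (\<forall>j\<in>K. cinner (v j) x = 0)"
proof -
  define S where "S = v ` K \<union> (\<lambda>j. \<i> *s v j) ` K"
  have "card S \<le> card (v ` K) + card ((\<lambda>j. \<i> *s v j) ` K)"
    unfolding S_def by (rule card_Un_le)
  also have "\<dots> \<le> card K + card K"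
    using \<open>finite K\<close> by (intro add_mono card_image_le) auto
  finally have "dim S < DIM(complex^'n)"
    using assms dim_le_card'[of S] by (simp add: S_def)
  then obtain x :: "complex^'n" where "x \<noteq> 0" and "\<And>y. y \<in> span S \<Longrightarrow> orthogonal x y"
    using orthogonal_to_subspace_exists by blast
  then have orth: "inner y x = 0" if "y \<in> S" for y
    using that span_base by (metis inner_commute orthogonal_def)
  \<comment> \<open>real orthogonality to both v and i v is complex orthogonality to v\<close>
  have "cinner (v j) x = 0" if "j \<in> K" for j
  proof -
    have "Re (cinner (v j) x) = 0" "Re (cinner (\<i> *s v j) x) = 0"
      using orth that by (auto simp: S_def Re_cinner)
    then show ?thesis by (simp add: cinner_smult_left complex_eq_iff)
  qed
  moreover have "norm ((1 / norm x) *\<^sub>R x) = 1"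
    using \<open>x \<noteq> 0\<close> by simp
  ultimately show ?thesis
    by (metis cinner_scaleR_right mult_zero_right)
qed

lemma Rayleigh_minimum:
  fixes A :: "complex^'n^'n"
  assumes "closed W" and cone: "\<And>x r. x \<in> W \<Longrightarrow> r *\<^sub>R x \<in> W" and "\<exists>x\<in>W. norm x = 1"
  shows "\<exists>x0\<in>W. norm x0 = 1 \<and> (\<forall>y\<in>W. inner x0 (A *v x0) * (norm y)\<^sup>2 \<le> inner y (A *v y))"
proof -
  define q where "q x = inner x (A *v x)" for x
  have "compact (W \<inter> sphere 0 1)"
    using \<open>closed W\<close> by (intro closed_Int_compact compact_sphere)
  moreover have "W \<inter> sphere 0 1 \<noteq> {}"
    using assms(3) by auto
  moreover have "continuous_on (W \<inter> sphere 0 1) q"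
  proof -
    have "linear (\<lambda>x. A *v x)"
      by (intro linearI) (simp_all add: matrix_vector_right_distrib matrix_vector_mult_scaleR_right)
    then show ?thesis
      unfolding q_def linear_conv_bounded_linear by (intro continuous_intros)
  qed
  ultimately have "\<exists>x0\<in>W \<inter> sphere 0 1. \<forall>y\<in>W \<inter> sphere 0 1. q x0 \<le> q y"
    by (rule continuous_attains_inf)
  then obtain x0 where x0: "x0 \<in> W \<inter> sphere 0 1" and min: "\<And>y. y \<in> W \<inter> sphere 0 1 \<Longrightarrow> q x0 \<le> q y"
    by blast
  have "q x0 * (norm y)\<^sup>2 \<le> q y" if "y \<in> W" for y
  proof (cases "y = 0")
    case False
    have "q x0 \<le> q ((1 / norm y) *\<^sub>R y)"
      using False that cone by (intro min) auto
    also have "\<dots> = q y / (norm y)\<^sup>2"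
      by (simp add: q_def matrix_vector_mult_scaleR_right power2_eq_square)
    finally show ?thesis
      using False by (simp add: field_simps)
  qed (simp add: q_def)
  then show ?thesis
    using x0 by (auto simp: q_def)
qed

lemma hermitian_nonneg_on_line_imp_kernel:
  assumes herm: "hermitian B"
    and nonneg: "\<And>t::real. 0 \<le> inner (x - t *\<^sub>R (B *v x)) (B *v (x - t *\<^sub>R (B *v x)))"
    and zero: "inner x (B *v x) = 0"
  shows "B *v x = 0"
proof (rule ccontr)
  define z where "z = B *v x"
  define a where "a = (norm z)\<^sup>2"
  define c where "c = inner z (B *v z)"
  assume "B *v x \<noteq> 0"
  then have "a > 0"
    by (simp add: a_def z_def)
  have "inner x (B *v z) = a"
    using hermitian_inner[OF herm, of x z] by (simp add: a_def z_def dot_square_norm)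
  then have expand: "inner (x - t *\<^sub>R z) (B *v (x - t *\<^sub>R z)) = t\<^sup>2 * c - 2 * t * a" for t
    using zero
    by (simp add: z_def c_def a_def matrix_vector_mult_diff_distrib matrix_vector_mult_scaleR_right
        inner_diff_left inner_diff_right dot_square_norm power2_eq_square algebra_simps)
  \<comment> \<open>a nonnegative quadratic with zero constant term has zero linear coefficient\<close>
  define t where "t = a / (\<bar>c\<bar> + 1)"
  have "t > 0"
    using \<open>a > 0\<close> by (simp add: t_def)
  have "t * \<bar>c\<bar> < a"
    using \<open>a > 0\<close> by (simp add: t_def divide_less_eq)
  have "t\<^sup>2 * c \<le> t * (t * \<bar>c\<bar>)"
    using \<open>t > 0\<close> by (simp add: power2_eq_square mult_left_mono)
  also have "\<dots> < t * a"
    using \<open>t > 0\<close> \<open>t * \<bar>c\<bar> < a\<close> by simp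
  finally have "t\<^sup>2 * c - 2 * t * a < 0"
    using mult_pos_pos[OF \<open>t > 0\<close> \<open>a > 0\<close>] by linarith
  then show False
    using nonneg[of t] expand[of t] unfolding z_def by linarith
qed

lemma closed_cinner_orthogonal: "closed {x. \<forall>j\<in>K. cinner (v j) x = 0}"
proof -
  have "closed {x. cinner (v j) x = 0}" for j
    unfolding cinner_def by (intro closed_Collect_eq continuous_intros)
  moreover have "{x. \<forall>j\<in>K. cinner (v j) x = 0} = (\<Inter>j\<in>K. {x. cinner (v j) x = 0})"
    by auto
  ultimately show ?thesis
    by auto
qed

lemma hermitian_eigenvector_orthogonal:
  fixes A :: "complex^'n^'n"
  assumes herm: "hermitian A" and "finite K" and "card K < CARD('n)"
    and eig: "\<And>j. j \<in> K \<Longrightarrow> A *v v j = d j *\<^sub>R v j"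
  shows "\<exists>x \<mu>. norm x = 1 \<and> (\<forall>j\<in>K. cinner (v j) x = 0) \<and> A *v x = \<mu> *\<^sub>R x"
proof -
  define W where "W = {x. \<forall>j\<in>K. cinner (v j) x = 0}"
  have "closed W"
    unfolding W_def by (rule closed_cinner_orthogonal)
  have W_diff: "x - r *\<^sub>R y \<in> W" if "x \<in> W" "y \<in> W" for x y r
    using that by (simp add: W_def cinner_diff_right cinner_scaleR_right)
  have W_scale: "r *\<^sub>R x \<in> W" if "x \<in> W" for x r
    using that by (simp add: W_def cinner_scaleR_right)
  have W_A: "A *v x \<in> W" if "x \<in> W" for x
    using that by (simp add: W_def hermitian_cinner[OF herm] eig cinner_scaleR_left)
  obtain x0 where "x0 \<in> W" "norm x0 = 1"
    and min: "\<And>y. y \<in> W \<Longrightarrow> inner x0 (A *v x0) * (norm y)\<^sup>2 \<le> inner y (A *v y)"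
    using Rayleigh_minimum[OF \<open>closed W\<close> W_scale, of A] exists_unit_orthogonal[OF assms(2,3), of v]
    by (auto simp: W_def)
  define \<mu> where "\<mu> = inner x0 (A *v x0)"
  define B where "B = A - mat (complex_of_real \<mu>)"
  have B_apply: "B *v y = A *v y - \<mu> *\<^sub>R y" for y
    by (simp add: B_def matrix_vector_mult_diff_rdistrib mat_matrix_vector_mult smult_of_real)
  have form_B: "inner y (B *v y) = inner y (A *v y) - \<mu> * (norm y)\<^sup>2" for y
    by (simp add: B_apply inner_diff_right power2_norm_eq_inner)
  have "B *v x0 = 0"
  proof (rule hermitian_nonneg_on_line_imp_kernel)
    show "hermitian B"
      using herm by (simp add: B_def hermitian_def adj_diff)
    have "B *v x0 \<in> W"
      using \<open>x0 \<in> W\<close> by (simp add: B_apply W_A W_diff)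
    then show "0 \<le> inner (x0 - t *\<^sub>R (B *v x0)) (B *v (x0 - t *\<^sub>R (B *v x0)))" for t
      using min[OF W_diff[OF \<open>x0 \<in> W\<close>]] by (simp add: form_B \<mu>_def)
    show "inner x0 (B *v x0) = 0"
      using \<open>norm x0 = 1\<close> by (simp add: form_B \<mu>_def)
  qed
  then have "A *v x0 = \<mu> *\<^sub>R x0"
    by (simp add: B_apply)
  then show ?thesis
    using \<open>x0 \<in> W\<close> \<open>norm x0 = 1\<close> unfolding W_def by blast
qed

lemma hermitian_orthonormal_eigenbasis:
  fixes A :: "complex^'n^'n"
  assumes herm: "hermitian A"
  shows "\<exists>(v::'n \<Rightarrow> complex^'n) d. (\<forall>k. norm (v k) = 1 \<and> A *v v k = d k *\<^sub>R v k)
     \<and> (\<forall>k l. k \<noteq> l \<longrightarrow> cinner (v k) (v l) = 0)"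
proof -
  have "\<exists>(v::'n \<Rightarrow> complex^'n) d. (\<forall>k\<in>K. norm (v k) = 1 \<and> A *v v k = d k *\<^sub>R v k)
     \<and> (\<forall>k\<in>K. \<forall>l\<in>K. k \<noteq> l \<longrightarrow> cinner (v k) (v l) = 0)" if "finite K" for K :: "'n set"
    using that
  proof (induction K rule: finite_induct)
    case (insert k K)
    from insert.IH obtain v d where eig: "\<forall>j\<in>K. norm (v j) = 1 \<and> A *v v j = d j *\<^sub>R v j"
      and orth: "\<forall>j\<in>K. \<forall>l\<in>K. j \<noteq> l \<longrightarrow> cinner (v j) (v l) = 0"
      by (elim exE conjE)
    have "card (insert k K) \<le> CARD('n)"
      by (rule card_mono) auto
    then have "card K < CARD('n)"
      using insert by simp
    then obtain x \<mu> where "norm x = 1" and x_orth: "\<forall>j\<in>K. cinner (v j) x = 0"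
      and "A *v x = \<mu> *\<^sub>R x"
      using hermitian_eigenvector_orthogonal[OF herm insert(1), of v d] eig by auto
    have x_orth': "\<forall>j\<in>K. cinner x (v j) = 0"
      using x_orth by (metis cinner_commute complex_cnj_zero)
    have "\<forall>j\<in>insert k K. norm ((v(k := x)) j) = 1 \<and> A *v (v(k := x)) j = (d(k := \<mu>)) j *\<^sub>R (v(k := x)) j"
      using eig \<open>norm x = 1\<close> \<open>A *v x = \<mu> *\<^sub>R x\<close> by simp
    moreover have "\<forall>j\<in>insert k K. \<forall>l\<in>insert k K. j \<noteq> l \<longrightarrow> cinner ((v(k := x)) j) ((v(k := x)) l) = 0"
      using orth x_orth x_orth' insert(2) by auto
    ultimately show ?case
      by blast
  qed simp
  from this[of UNIV] show ?thesis
    by simp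
qed

definition diagm :: "('n \<Rightarrow> real) \<Rightarrow> complex^'n^'n" where
  "diagm d = (\<chi> i j. if i = j then complex_of_real (d i) else 0)"

lemma adj_diagm [simp]: "adj (diagm d) = diagm d"
  by (simp add: adj_def diagm_def vec_eq_iff)

lemma diagm_mult: "diagm a ** diagm b = diagm (\<lambda>i. a i * b i)"
proof -
  have mult_left: "(diagm a ** M) $ i $ j = complex_of_real (a i) * M $ i $ j" for M i j
    unfolding diagm_def matrix_matrix_mult_def by (simp add: if_distrib if_distribR cong: if_cong)
  show ?thesis
    by (simp add: vec_eq_iff mult_left) (simp add: diagm_def)
qed

lemma diagm_diff: "diagm a - diagm b = diagm (\<lambda>i. a i - b i)"
  by (simp add: diagm_def vec_eq_iff)

lemma unitary_conj_mult:
  assumes "adj U ** U = mat 1"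
  shows "(U ** A ** adj U) ** (U ** B ** adj U) = U ** (A ** B) ** adj U"
proof -
  have "(U ** A ** adj U) ** (U ** B ** adj U) = U ** A ** (adj U ** U) ** B ** adj U"
    by (simp add: matrix_mul_assoc)
  then show ?thesis
    by (simp add: assms matrix_mul_assoc)
qed

lemma hermitian_spectral_decomposition:
  fixes A :: "complex^'n^'n"
  assumes "hermitian A"
  shows "\<exists>U d. adj U ** U = mat 1 \<and> A = U ** diagm d ** adj U \<and> (\<forall>k. is_eigenvalue A (complex_of_real (d k)))"
proof -
  obtain v :: "'n \<Rightarrow> complex^'n" and d where unit: "\<And>k. norm (v k) = 1"
    and eig: "\<And>k. A *v v k = d k *\<^sub>R v k" and orth: "\<And>k l. k \<noteq> l \<Longrightarrow> cinner (v k) (v l) = 0"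
    using hermitian_orthonormal_eigenbasis[OF assms] by blast
  define U :: "complex^'n^'n" where "U = (\<chi> i k. v k $ i)"
  have "(adj U ** U) $ k $ l = cinner (v k) (v l)" for k l
    by (simp add: U_def adj_def matrix_matrix_mult_def cinner_def)
  then have unitary: "adj U ** U = mat 1"
    using orth unit by (auto simp: vec_eq_iff mat_def cinner_self)
  have "A ** U = U ** diagm d"
    using eig by (simp add: U_def diagm_def matrix_matrix_mult_def vec_eq_iff if_distrib if_distribR
        sum.delta' complex_scaleR matrix_vector_mult_def mult.commute cong: if_cong)
  then have "A = U ** diagm d ** adj U"
    using unitary matrix_left_right_inverse[of U "adj U"] by (metis matrix_mul_assoc matrix_mul_rid)
  moreover have "is_eigenvalue A (complex_of_real (d k))" for k
    unfolding is_eigenvalue_def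
  proof (intro exI conjI)
    show "v k \<noteq> 0"
      using unit[of k] by auto
    show "A *v v k = (\<chi> j. complex_of_real (d k) * v k $ j)"
      using eig[of k] by (simp add: vec_eq_iff complex_scaleR)
  qed
  ultimately show ?thesis
    using unitary by blast
qed

section \<open>Positive semidefinite matrices and measurements\<close>

definition nonneg_form :: "complex^'n^'n \<Rightarrow> bool" where
  "nonneg_form A \<longleftrightarrow> (\<forall>v. 0 \<le> inner v (A *v v))"

lemma nonneg_form_zero: "nonneg_form 0"
  by (simp add: nonneg_form_def)

lemma nonneg_form_add: "nonneg_form A \<Longrightarrow> nonneg_form B \<Longrightarrow> nonneg_form (A + B)"
  by (simp add: nonneg_form_def matrix_vector_mult_add_rdistrib inner_add_right)

lemma nonneg_form_sum: "(\<And>i. i \<in> I \<Longrightarrow> nonneg_form (f i)) \<Longrightarrow> nonneg_form (sum f I)"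
  by (induction I rule: infinite_finite_induct) (simp_all add: nonneg_form_add nonneg_form_zero)

lemma nonneg_form_scaleR: "nonneg_form A \<Longrightarrow> 0 \<le> r \<Longrightarrow> nonneg_form (r *\<^sub>R A)"
proof -
  assume "nonneg_form A" "0 \<le> r"
  moreover have "(r *\<^sub>R A) *v v = r *\<^sub>R (A *v v)" for v
    by (simp add: matrix_vector_mult_def vec_eq_iff scaleR_sum_right)
  ultimately show ?thesis
    by (simp add: nonneg_form_def)
qed

lemma nonneg_form_conj: "nonneg_form A \<Longrightarrow> nonneg_form (adj C ** A ** C)"
  by (simp add: nonneg_form_def inner_adj flip: matrix_vector_mul_assoc matrix_mul_assoc)

lemma inner_diagm: "inner y (diagm d *v y) = (\<Sum>i\<in>UNIV. d i * (norm (y $ i))\<^sup>2)"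
  by (simp add: inner_vec_def diagm_def matrix_vector_mult_def if_distrib if_distribR sum.delta'
      complex_scaleR[symmetric] power2_norm_eq_inner cong: if_cong)

lemma nonneg_form_diagm: "(\<And>i. 0 \<le> d i) \<Longrightarrow> nonneg_form (diagm d)"
  by (simp add: nonneg_form_def inner_diagm sum_nonneg)

lemma nonneg_form_unitary_diagm: "(\<And>i. 0 \<le> d i) \<Longrightarrow> nonneg_form (U ** diagm d ** adj U)"
  using nonneg_form_conj[OF nonneg_form_diagm, of d "adj U"] by simp

lemma hermitian_unitary_diagm: "hermitian (U ** diagm d ** adj U)"
  by (simp add: hermitian_def adj_mult matrix_mul_assoc)

lemma psd_iff_nonneg_form: "psd A \<longleftrightarrow> hermitian A \<and> nonneg_form A"
proof (intro iffI conjI)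
  assume "psd A"
  then have "hermitian A"
    by (simp add: psd_def)
  then obtain U d where "A = U ** diagm d ** adj U" and eig: "\<forall>k. is_eigenvalue A (complex_of_real (d k))"
    using hermitian_spectral_decomposition by blast
  moreover have "\<And>k. 0 \<le> d k"
    using \<open>psd A\<close> eig by (auto simp: psd_def)
  ultimately show "nonneg_form A"
    by (simp add: nonneg_form_unitary_diagm)
  show "hermitian A"
    by fact
next
  assume A: "hermitian A \<and> nonneg_form A"
  have "c \<in> \<real> \<and> 0 \<le> Re c" if "is_eigenvalue A c" for c
  proof -
    obtain v where "v \<noteq> 0" and "A *v v = c *s v"
      using \<open>is_eigenvalue A c\<close> by (auto simp: is_eigenvalue_def vector_scalar_mult_def)
    then have c: "cinner v (A *v v) = c * complex_of_real ((norm v)\<^sup>2)"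
      by (simp add: cinner_smult_right cinner_self)
    have "cinner v (A *v v) \<in> \<real>"
      using A by (metis Reals_cnj_iff cinner_commute hermitian_cinner)
    moreover have "0 \<le> Re (cinner v (A *v v))"
      using A by (simp add: nonneg_form_def Re_cinner)
    moreover have "c = cinner v (A *v v) / complex_of_real ((norm v)\<^sup>2)"
      using \<open>v \<noteq> 0\<close> c by simp
    ultimately show ?thesis
      by (simp add: Re_divide_of_real)
  qed
  then show "psd A"
    using A by (simp add: psd_def)
qed

lemma psd_nonneg_form: "psd A \<Longrightarrow> nonneg_form A"
  by (simp add: psd_iff_nonneg_form)

lemma psd_sqrt:
  assumes "psd A"
  shows "psd (psd_sqrt A)" and "psd_sqrt A ** psd_sqrt A = A"
proof -
  have "hermitian A"
    using assms by (simp add: psd_def)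
  then obtain U d where unitary: "adj U ** U = mat 1" and A: "A = U ** diagm d ** adj U"
    and eig: "\<forall>k. is_eigenvalue A (complex_of_real (d k))"
    using hermitian_spectral_decomposition by blast
  have d: "0 \<le> d k" for k
    using assms eig by (auto simp: psd_def)
  define S where "S = U ** diagm (\<lambda>k. sqrt (d k)) ** adj U"
  have "psd S"
    using d by (simp add: S_def psd_iff_nonneg_form hermitian_unitary_diagm nonneg_form_unitary_diagm)
  moreover have "S ** S = A"
    using d by (simp add: S_def A unitary_conj_mult[OF unitary] diagm_mult)
  ultimately have "\<exists>S. psd S \<and> S ** S = A"
    by blast
  then have "psd (psd_sqrt A) \<and> psd_sqrt A ** psd_sqrt A = A"
    unfolding psd_sqrt_def by (rule someI_ex)
  then show "psd (psd_sqrt A)" and "psd_sqrt A ** psd_sqrt A = A"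
    by auto
qed

lemma measurement_psd: "is_measurement E \<Longrightarrow> psd E"
  by (simp add: is_measurement_def psd_def)

lemma measurement_psd_complement:
  assumes "is_measurement E"
  shows "psd (mat 1 - E)"
  unfolding psd_def
proof (intro conjI allI impI)
  show "hermitian (mat 1 - E)"
    using assms by (simp add: is_measurement_def hermitian_def adj_diff)
  fix c
  assume "is_eigenvalue (mat 1 - E) c"
  then obtain v where "v \<noteq> 0" and "(mat 1 - E) *v v = (\<chi> j. c * v $ j)"
    by (auto simp: is_eigenvalue_def)
  then have "is_eigenvalue E (1 - c)"
    unfolding is_eigenvalue_def
    by (intro exI[of _ v]) (simp add: matrix_vector_mult_diff_rdistrib vec_eq_iff algebra_simps)
  then have "1 - c \<in> \<real>" and "Re (1 - c) \<le> 1"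
    using assms by (auto simp: is_measurement_def)
  moreover have "c = 1 - (1 - c)"
    by simp
  ultimately show "c \<in> \<real>" and "0 \<le> Re c"
    by (metis Reals_1 Reals_diff, simp)
qed

lemma measurement_psd_sqrt:
  assumes "is_measurement E"
  shows "is_measurement (psd_sqrt E)"
proof -
  let ?S = "psd_sqrt E"
  have "psd ?S" and square: "?S ** ?S = E"
    using psd_sqrt measurement_psd[OF assms] by auto
  have "Re c \<le> 1" if eig: "is_eigenvalue ?S c" for c
  proof -
    obtain v where "v \<noteq> 0" and v: "?S *v v = c *s v"
      using eig by (auto simp: is_eigenvalue_def vector_scalar_mult_def)
    have "c \<in> \<real>" "0 \<le> Re c"
      using \<open>psd ?S\<close> eig by (auto simp: psd_def)
    have "E *v v = ?S *v (?S *v v)"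
      by (simp add: matrix_vector_mul_assoc square)
    also have "\<dots> = (c * c) *s v"
      by (simp add: v vector_scalar_commute vector_smult_assoc)
    finally have "E *v v = (c * c) *s v" .
    then have "is_eigenvalue E (c * c)"
      using \<open>v \<noteq> 0\<close> by (auto simp: is_eigenvalue_def vector_scalar_mult_def)
    then have "Re (c * c) \<le> 1"
      using assms unfolding is_measurement_def by blast
    moreover have "Re (c * c) = Re c * Re c"
      using \<open>c \<in> \<real>\<close> by (auto elim: Reals_cases)
    ultimately show ?thesis
      using \<open>0 \<le> Re c\<close> by (metis less_1_mult not_le)
  qed
  then show ?thesis
    using \<open>psd ?S\<close> by (auto simp: is_measurement_def psd_def)
qed

lemma measurement_nonneg_form_diff_square:
  assumes "is_measurement S"
  shows "nonneg_form (S - S ** S)"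
proof -
  have "hermitian S"
    using assms by (simp add: is_measurement_def)
  then obtain U d where unitary: "adj U ** U = mat 1" and S: "S = U ** diagm d ** adj U"
    and eig: "\<forall>k. is_eigenvalue S (complex_of_real (d k))"
    using hermitian_spectral_decomposition by blast
  have "0 \<le> d k - d k * d k" for k
  proof -
    have "0 \<le> d k" "d k \<le> 1"
      using eig assms by (auto simp: is_measurement_def)
    then show ?thesis
      by (simp add: mult_left_le)
  qed
  moreover have "S - S ** S = U ** diagm (\<lambda>k. d k - d k * d k) ** adj U"
    by (simp add: S unitary_conj_mult[OF unitary] diagm_mult matrix_diff_ldistrib matrix_diff_rdistrib
        flip: diagm_diff)
  ultimately show ?thesis
    by (simp add: nonneg_form_unitary_diagm)
qed

section \<open>The Hilbert-Schmidt inner product\<close>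

lemma inner_matrix_eq_Re_trace: "inner W Y = Re (trace (adj W ** (Y::complex^'n^'n)))"
proof -
  have "Re (trace (adj W ** Y)) = (\<Sum>j\<in>UNIV. \<Sum>i\<in>UNIV. Re (cnj (W $ i $ j) * Y $ i $ j))"
    unfolding trace_def adj_def matrix_matrix_mult_def by (simp add: Re_sum)
  also have "\<dots> = (\<Sum>i\<in>UNIV. \<Sum>j\<in>UNIV. Re (cnj (W $ i $ j) * Y $ i $ j))"
    by (rule sum.swap)
  also have "\<dots> = inner W Y"
    by (simp add: inner_vec_def inner_complex_def)
  finally show ?thesis
    by simp
qed

lemma inner_matrix_mult_left: "inner (M ** W) Y = inner W (adj M ** (Y::complex^'n^'n))"
  by (simp add: inner_matrix_eq_Re_trace adj_mult matrix_mul_assoc)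

lemma nonneg_form_Re_trace: "nonneg_form A \<Longrightarrow> 0 \<le> Re (trace A)"
proof -
  assume "nonneg_form A"
  then have "0 \<le> inner (axis k 1) (A *v axis k 1)" for k
    by (simp add: nonneg_form_def)
  moreover have "inner (axis k 1) (A *v axis k 1) = Re (A $ k $ k)" for k
  proof -
    have "(A *v axis k 1) $ k = A $ k $ k"
      by (simp add: matrix_vector_mult_def axis_def if_distrib cong: if_cong)
    then show ?thesis
      by (simp add: inner_axis' inner_complex_def)
  qed
  ultimately show ?thesis
    by (simp add: trace_def Re_sum sum_nonneg)
qed

lemma inner_mult_nonneg: "nonneg_form P \<Longrightarrow> 0 \<le> inner Z (P ** (Z::complex^'n^'n))"
  by (simp add: inner_matrix_eq_Re_trace nonneg_form_Re_trace nonneg_form_conj matrix_mul_assoc)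

lemma Re_trace_mult_nonneg:
  assumes "psd P" and "nonneg_form Y"
  shows "0 \<le> Re (trace (P ** Y))"
proof -
  let ?S = "psd_sqrt P"
  have "adj ?S = ?S" and square: "?S ** ?S = P"
    using psd_sqrt[OF assms(1)] by (auto simp: psd_def hermitian_def)
  have "trace (P ** Y) = trace (?S ** (?S ** Y))"
    by (simp add: matrix_mul_assoc square)
  also have "\<dots> = trace (adj ?S ** Y ** ?S)"
    by (metis \<open>adj ?S = ?S\<close> trace_mul_sym)
  finally show ?thesis
    using nonneg_form_Re_trace[OF nonneg_form_conj[OF assms(2)]] by simp
qed

lemma norm_psd_sqrt_mult_le:
  assumes "is_measurement E"
  shows "norm (psd_sqrt E ** Y) \<le> norm (Y::complex^'n^'n)"
proof -
  let ?S = "psd_sqrt E"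
  have "adj ?S = ?S" and square: "?S ** ?S = E"
    using psd_sqrt measurement_psd[OF assms] by (auto simp: psd_def hermitian_def)
  then have "(norm (?S ** Y))\<^sup>2 = inner Y (E ** Y)"
    by (simp add: power2_norm_eq_inner inner_matrix_mult_left matrix_mul_assoc)
  also have "\<dots> \<le> inner Y Y"
    using inner_mult_nonneg[OF psd_nonneg_form[OF measurement_psd_complement[OF assms]], of Y]
    by (simp add: matrix_diff_rdistrib inner_diff_right)
  also have "\<dots> = (norm Y)\<^sup>2"
    by (simp add: power2_norm_eq_inner)
  finally show ?thesis
    by (rule power2_le_imp_le) simp
qed

lemma gentle_measurement:
  assumes "is_measurement E" and "hermitian G" and "trace (G ** G) = 1"
  shows "(norm (psd_sqrt E ** G - G))\<^sup>2 \<le> 1 - acc_prob E (G ** G)"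
proof -
  let ?S = "psd_sqrt E"
  have adj_S: "adj ?S = ?S" and square: "?S ** ?S = E"
    using psd_sqrt measurement_psd[OF assms(1)] by (auto simp: psd_def hermitian_def)
  have adj_G: "adj G = G"
    using assms(2) by (simp add: hermitian_def)
  have "trace (E ** (G ** G)) = trace (G ** (E ** G))"
    by (metis matrix_mul_assoc trace_mul_sym)
  then have acc: "acc_prob E (G ** G) = inner G (E ** G)"
    by (simp add: acc_prob_def inner_matrix_eq_Re_trace adj_G)
  have "(norm (?S ** G))\<^sup>2 = inner G (E ** G)"
    using adj_S square by (simp add: power2_norm_eq_inner inner_matrix_mult_left matrix_mul_assoc)
  moreover have "inner G (E ** G) \<le> inner (?S ** G) G"
  proof -
    have "0 \<le> inner G ((?S - ?S ** ?S) ** G)"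
      using measurement_nonneg_form_diff_square[OF measurement_psd_sqrt[OF assms(1)]]
      by (rule inner_mult_nonneg)
    then show ?thesis
      using adj_S square by (simp add: matrix_diff_rdistrib inner_diff_right inner_matrix_mult_left)
  qed
  moreover have "(norm G)\<^sup>2 = 1"
    using assms(3) by (simp add: power2_norm_eq_inner inner_matrix_eq_Re_trace adj_G)
  moreover have "(norm (?S ** G - G))\<^sup>2 = (norm (?S ** G))\<^sup>2 + (norm G)\<^sup>2 - 2 * inner (?S ** G) G"
    using dot_norm_neg[of "?S ** G" G] by simp
  ultimately show ?thesis
    using acc by linarith
qed

section \<open>Averaged measurement maps\<close>

definition conj_avg :: "(nat \<Rightarrow> complex^'n^'n) \<Rightarrow> nat \<Rightarrow> complex^'n^'n \<Rightarrow> complex^'n^'n" where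
  "conj_avg S m X = (1 / real m) *\<^sub>R (\<Sum>i<m. S i ** X ** S i)"

definition left_avg :: "(nat \<Rightarrow> complex^'n^'n) \<Rightarrow> nat \<Rightarrow> complex^'n^'n \<Rightarrow> complex^'n^'n" where
  "left_avg S m Z = (1 / real m) *\<^sub>R (\<Sum>i<m. S i ** Z)"

lemma linear_funpow:
  fixes f :: "'a::real_vector \<Rightarrow> 'a"
  assumes "linear f"
  shows "linear (f ^^ n)"
proof (rule linearI)
  show "(f ^^ n) (x + y) = (f ^^ n) x + (f ^^ n) y" for x y
    by (induction n) (simp_all add: linear_add[OF assms])
  show "(f ^^ n) (r *\<^sub>R x) = r *\<^sub>R (f ^^ n) x" for r x
    by (induction n) (simp_all add: linear_cmul[OF assms])
qed

lemma linear_conj_avg: "linear (conj_avg S m)"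
  by (rule linearI) (simp_all add: conj_avg_def matrix_add_ldistrib matrix_add_rdistrib sum.distrib
      scaleR_add_right matrix_mult_scaleR_left matrix_mult_scaleR_right scaleR_sum_right)

lemma linear_left_avg: "linear (left_avg S m)"
  by (rule linearI) (simp_all add: left_avg_def matrix_add_ldistrib sum.distrib scaleR_add_right
      matrix_mult_scaleR_right scaleR_sum_right)

lemma nonneg_form_conj_avg:
  assumes "\<And>i. i < m \<Longrightarrow> hermitian (S i)" and "nonneg_form X"
  shows "nonneg_form (conj_avg S m X)"
  unfolding conj_avg_def
proof (intro nonneg_form_scaleR nonneg_form_sum)
  fix i
  assume "i \<in> {..<m}"
  then have "adj (S i) = S i"
    using assms(1) by (simp add: hermitian_def)
  then show "nonneg_form (S i ** X ** S i)"
    using nonneg_form_conj[OF assms(2), of "S i"] by simp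
qed simp

lemma Re_trace_conj_avg:
  "Re (trace (conj_avg S m X)) = (1 / real m) * (\<Sum>i<m. Re (trace (S i ** S i ** X)))"
proof -
  have "trace (S i ** X ** S i) = trace (S i ** S i ** X)" for i
    by (metis matrix_mul_assoc trace_mul_sym)
  then show ?thesis
    by (simp add: conj_avg_def trace_scaleR trace_sum)
qed

lemma norm_funpow_diff_le:
  fixes L :: "'a::real_normed_vector \<Rightarrow> 'a"
  assumes "linear L" and contr: "\<And>y. norm (L y) \<le> norm y"
  shows "norm ((L ^^ t) x - x) \<le> real t * norm (L x - x)"
proof (induction t)
  case (Suc t)
  have "(L ^^ Suc t) x - x = L ((L ^^ t) x - x) + (L x - x)"
    by (simp add: linear_diff[OF assms(1)])
  then have "norm ((L ^^ Suc t) x - x) \<le> norm (L ((L ^^ t) x - x)) + norm (L x - x)"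
    by (metis norm_triangle_ineq)
  also have "\<dots> \<le> real t * norm (L x - x) + norm (L x - x)"
    using contr[of "(L ^^ t) x - x"] Suc by linarith
  finally show ?case
    by (simp add: algebra_simps)
qed simp

lemma norm_left_avg_diff_le:
  assumes "m > 0" and "\<And>i. i < m \<Longrightarrow> norm (S i ** Z - W) \<le> \<delta>"
  shows "norm (left_avg S m Z - W) \<le> \<delta>"
proof -
  have "(1 / real m) *\<^sub>R (\<Sum>i<m. W) = W"
    using assms(1) by (simp add: sum_constant_scaleR del: sum_constant)
  then have "left_avg S m Z - W = (1 / real m) *\<^sub>R (\<Sum>i<m. S i ** Z - W)"
    by (simp add: left_avg_def sum_subtractf scaleR_diff_right)
  moreover have "norm (\<Sum>i<m. S i ** Z - W) \<le> real m * \<delta>"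
    using sum_norm_bound[of "{..<m}" "\<lambda>i. S i ** Z - W" \<delta>] assms(2) by simp
  ultimately show ?thesis
    using assms(1) by (simp add: field_simps)
qed

lemma trace_conj_avg_funpow_ge:
  assumes "m > 0" and herm: "\<And>i. i < m \<Longrightarrow> hermitian (S i)"
  shows "2 * inner G ((left_avg S m ^^ t) Z) - (norm G)\<^sup>2
    \<le> Re (trace ((conj_avg S m ^^ t) (Z ** adj Z)))"
proof (induction t arbitrary: Z)
  case 0
  have "trace (Z ** adj Z) = trace (adj Z ** Z)"
    by (rule trace_mul_sym)
  then have "Re (trace (Z ** adj Z)) = (norm Z)\<^sup>2"
    by (simp add: power2_norm_eq_inner inner_matrix_eq_Re_trace)
  moreover have "2 * inner G Z = (norm G)\<^sup>2 + (norm Z)\<^sup>2 - (norm (G - Z))\<^sup>2"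
    using dot_norm_neg[of G Z] by simp
  moreover have "0 \<le> (norm (G - Z))\<^sup>2"
    by simp
  ultimately show ?case
    unfolding funpow_0 by linarith
next
  case (Suc t)
  let ?F = "conj_avg S m" and ?L = "left_avg S m"
  have lin_F: "linear (?F ^^ t)" and lin_L: "linear (?L ^^ t)"
    by (simp_all add: linear_funpow linear_conj_avg linear_left_avg)
  have "S i ** (Z ** adj Z) ** S i = (S i ** Z) ** adj (S i ** Z)" if "i < m" for i
    using herm[OF that] by (simp add: adj_mult hermitian_def matrix_mul_assoc)
  then have "?F (Z ** adj Z) = (1 / real m) *\<^sub>R (\<Sum>i<m. (S i ** Z) ** adj (S i ** Z))"
    by (simp add: conj_avg_def)
  then have "Re (trace ((?F ^^ Suc t) (Z ** adj Z)))
      = (1 / real m) * (\<Sum>i<m. Re (trace ((?F ^^ t) ((S i ** Z) ** adj (S i ** Z)))))"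
    by (simp add: funpow_swap1 linear_cmul[OF lin_F] linear_sum[OF lin_F] trace_scaleR trace_sum)
  also have "\<dots> \<ge> (1 / real m) * (\<Sum>i<m. 2 * inner G ((?L ^^ t) (S i ** Z)) - (norm G)\<^sup>2)"
    using Suc.IH by (intro mult_left_mono sum_mono) auto
  also have "(1 / real m) * (\<Sum>i<m. 2 * inner G ((?L ^^ t) (S i ** Z)) - (norm G)\<^sup>2)
      = 2 * inner G ((?L ^^ Suc t) Z) - (norm G)\<^sup>2"
    using \<open>m > 0\<close>
    by (simp add: funpow_swap1 left_avg_def linear_cmul[OF lin_L] linear_sum[OF lin_L]
        inner_sum_right sum_subtractf sum_distrib_left field_simps)
  finally show ?case .
qed

section \<open>The test procedure\<close>

fun uniform_chain :: "nat \<Rightarrow> nat \<Rightarrow> test" where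
  "uniform_chain m 0 = [(1, Success)]"
| "uniform_chain m (Suc t) =
     concat (map (\<lambda>i. map (\<lambda>(w, p). (w / real m, Meas i p Failure)) (uniform_chain m t)) [0..<m])"

definition uniform_test :: "nat \<Rightarrow> nat \<Rightarrow> test" where
  "uniform_test m T = concat (map (\<lambda>t. map (\<lambda>(w, p). (w / real T, p)) (uniform_chain m t)) [0..<T])"

lemma sum_list_concat_map: "sum_list (map f (concat (map g xs))) = (\<Sum>x\<leftarrow>xs. sum_list (map f (g x)))"
  by (induction xs) simp_all

lemma sum_list_rescale:
  fixes F :: "'p \<Rightarrow> 'v::real_vector"
  shows "(\<Sum>(w, p)\<leftarrow>map (\<lambda>(w, p). (w / c, g p)) L. w *\<^sub>R F p) = (1 / c) *\<^sub>R (\<Sum>(w, p)\<leftarrow>L. w *\<^sub>R F (g p))"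
  by (induction L) (auto simp: scaleR_add_right)

lemma uniform_chain_Suc_sum:
  fixes F :: "proc \<Rightarrow> 'v::real_vector"
  shows "(\<Sum>(w, p)\<leftarrow>uniform_chain m (Suc t). w *\<^sub>R F p)
    = (1 / real m) *\<^sub>R (\<Sum>i<m. \<Sum>(w, p)\<leftarrow>uniform_chain m t. w *\<^sub>R F (Meas i p Failure))"
  by (simp only: uniform_chain.simps sum_list_concat_map sum_list_rescale interv_sum_list_conv_sum_set_nat
      set_upt atLeast0LessThan scaleR_sum_right)

lemma uniform_test_sum:
  fixes F :: "proc \<Rightarrow> 'v::real_vector"
  shows "(\<Sum>(w, p)\<leftarrow>uniform_test m T. w *\<^sub>R F p)
    = (1 / real T) *\<^sub>R (\<Sum>t<T. \<Sum>(w, p)\<leftarrow>uniform_chain m t. w *\<^sub>R F p)"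
  by (simp only: uniform_test_def sum_list_concat_map sum_list_rescale interv_sum_list_conv_sum_set_nat
      set_upt atLeast0LessThan scaleR_sum_right)

lemma uniform_chain_elements:
  "(w, p) \<in> set (uniform_chain m t) \<Longrightarrow> 0 \<le> w \<and> uses_below m p \<and> depth p = t"
  by (induction t arbitrary: w p) auto

lemma uniform_chain_total_weight: "m > 0 \<Longrightarrow> (\<Sum>(w, p)\<leftarrow>uniform_chain m t. w) = 1"
proof (induction t)
  case (Suc t)
  then show ?case
    using uniform_chain_Suc_sum[where F = "\<lambda>_. 1::real"] by simp
qed simp

lemma valid_uniform_test:
  assumes "m > 0" and "T > 0"
  shows "valid_test m T (uniform_test m T)"
proof -
  have "0 \<le> w \<and> uses_below m p \<and> depth p \<le> T" if "(w, p) \<in> set (uniform_test m T)" for w p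
    using that uniform_chain_elements by (fastforce simp: uniform_test_def)
  moreover have "(\<Sum>(w, p)\<leftarrow>uniform_test m T. w) = 1"
    using uniform_test_sum[where F = "\<lambda>_. 1::real"] assms
    by (simp add: uniform_chain_total_weight)
  ultimately show ?thesis
    by (auto simp: valid_test_def)
qed

lemma succ_state_uniform_chain:
  "succ_state E (uniform_chain m t) X = (conj_avg (\<lambda>i. psd_sqrt (E i)) m ^^ t) X"
proof (induction t arbitrary: X)
  case (Suc t)
  let ?F = "conj_avg (\<lambda>i. psd_sqrt (E i)) m"
  have "succ_state E (uniform_chain m (Suc t)) X
      = (1 / real m) *\<^sub>R (\<Sum>i<m. succ_state E (uniform_chain m t) (psd_sqrt (E i) ** X ** psd_sqrt (E i)))"
    unfolding succ_state_def uniform_chain_Suc_sum by simp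
  also have "\<dots> = (?F ^^ t) (?F X)"
    using linear_funpow[OF linear_conj_avg[of "\<lambda>i. psd_sqrt (E i)" m], of t]
    by (simp add: Suc conj_avg_def[of _ _ X] linear_cmul linear_sum)
  finally show ?case
    by (simp add: funpow_swap1)
qed (simp add: succ_state_def)

lemma succ_state_uniform_test:
  "succ_state E (uniform_test m T) X = (1 / real T) *\<^sub>R (\<Sum>t<T. (conj_avg (\<lambda>i. psd_sqrt (E i)) m ^^ t) X)"
  unfolding succ_state_def uniform_test_sum by (simp add: succ_state_uniform_chain[unfolded succ_state_def])

section \<open>Completeness and soundness\<close>

lemma norm_left_avg_funpow_diff_le:
  assumes meas: "\<And>i. i < m \<Longrightarrow> is_measurement (E i)" and "m > 0"
    and "hermitian G" and "trace (G ** G) = 1"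
    and acc: "\<And>i. i < m \<Longrightarrow> 1 - \<epsilon> \<le> acc_prob (E i) (G ** G)"
  shows "norm ((left_avg (\<lambda>i. psd_sqrt (E i)) m ^^ t) G - G) \<le> real t * sqrt \<epsilon>"
proof -
  let ?L = "left_avg (\<lambda>i. psd_sqrt (E i)) m"
  have "norm (psd_sqrt (E i) ** G - G) \<le> sqrt \<epsilon>" if "i < m" for i
  proof (rule real_le_rsqrt)
    have "(norm (psd_sqrt (E i) ** G - G))\<^sup>2 \<le> 1 - acc_prob (E i) (G ** G)"
      using assms(3,4) by (rule gentle_measurement[OF meas[OF that]])
    then show "(norm (psd_sqrt (E i) ** G - G))\<^sup>2 \<le> \<epsilon>"
      using acc[OF that] by linarith
  qed
  then have "norm (?L G - G) \<le> sqrt \<epsilon>"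
    by (rule norm_left_avg_diff_le[OF \<open>m > 0\<close>])
  moreover have "norm ((?L ^^ t) G - G) \<le> real t * norm (?L G - G)"
  proof (rule norm_funpow_diff_le[OF linear_left_avg])
    show "norm (?L Y) \<le> norm Y" for Y
      using norm_left_avg_diff_le[OF \<open>m > 0\<close>, of _ Y 0] norm_psd_sqrt_mult_le[OF meas] by simp
  qed
  ultimately show ?thesis
    by (meson mult_left_mono of_nat_0_le_iff order_trans)
qed

lemma Re_trace_accept_funpow_ge:
  assumes meas: "\<And>i. i < m \<Longrightarrow> is_measurement (E i)" and "m > 0" and "density \<rho>"
    and acc: "\<And>i. i < m \<Longrightarrow> 1 - \<epsilon> \<le> acc_prob (E i) \<rho>"
  shows "1 - 2 * real t * sqrt \<epsilon> \<le> Re (trace ((conj_avg (\<lambda>i. psd_sqrt (E i)) m ^^ t) \<rho>))"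
proof -
  let ?S = "\<lambda>i. psd_sqrt (E i)"
  let ?L = "left_avg ?S m"
  define G where "G = psd_sqrt \<rho>"
  have "psd \<rho>" and "trace \<rho> = 1"
    using \<open>density \<rho>\<close> by (auto simp: density_def)
  then have "hermitian G" and adj_G: "adj G = G" and \<rho>: "\<rho> = G ** G"
    using psd_sqrt[OF \<open>psd \<rho>\<close>] by (auto simp: G_def psd_def hermitian_def)
  have "(norm G)\<^sup>2 = 1"
    using \<open>trace \<rho> = 1\<close> by (simp add: power2_norm_eq_inner inner_matrix_eq_Re_trace adj_G \<rho>)
  then have "norm G = 1"
    using norm_ge_zero[of G] by (auto simp: power2_eq_1_iff)
  have "norm ((?L ^^ t) G - G) \<le> real t * sqrt \<epsilon>"
    using norm_left_avg_funpow_diff_le[OF meas \<open>m > 0\<close> \<open>hermitian G\<close>] \<open>trace \<rho> = 1\<close> acc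
    by (simp add: \<rho>)
  then have "1 - real t * sqrt \<epsilon> \<le> inner G ((?L ^^ t) G)"
    using Cauchy_Schwarz_ineq2[of G "(?L ^^ t) G - G"] \<open>norm G = 1\<close>
    by (simp add: inner_diff_right dot_square_norm)
  moreover have "hermitian (?S i)" if "i < m" for i
    using measurement_psd_sqrt[OF meas[OF that]] by (simp add: is_measurement_def)
  then have "2 * inner G ((?L ^^ t) G) - (norm G)\<^sup>2 \<le> Re (trace ((conj_avg ?S m ^^ t) \<rho>))"
    using trace_conj_avg_funpow_ge[OF \<open>m > 0\<close>, where G = G and Z = G] by (simp add: \<rho> adj_G)
  ultimately show ?thesis
    using \<open>norm G = 1\<close> by simp
qed

lemma uniform_test_completeness:
  assumes meas: "\<And>i. i < m \<Longrightarrow> is_measurement (E i)" and "m > 0" and "T > 0" and "density \<rho>"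
    and "0 \<le> \<epsilon>" and acc: "\<And>i. i < m \<Longrightarrow> 1 - \<epsilon> \<le> acc_prob (E i) \<rho>"
  shows "1 - real T * sqrt \<epsilon> \<le> succ_prob E (uniform_test m T) \<rho>"
proof -
  have "(\<Sum>t<T. 1 - 2 * real t * sqrt \<epsilon>) \<le> (\<Sum>t<T. Re (trace ((conj_avg (\<lambda>i. psd_sqrt (E i)) m ^^ t) \<rho>)))"
    using Re_trace_accept_funpow_ge[OF assms(1,2,4) acc] by (intro sum_mono)
  moreover have "(\<Sum>t<T. 1 - 2 * real t * sqrt \<epsilon>) = real T - real T * (real T - 1) * sqrt \<epsilon>"
    by (induction T) (simp_all add: algebra_simps)
  moreover have "real T * (real T - 1) * sqrt \<epsilon> \<le> real T * real T * sqrt \<epsilon>"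
    using \<open>0 \<le> \<epsilon>\<close> by (intro mult_right_mono mult_left_mono) simp_all
  ultimately show ?thesis
    using \<open>T > 0\<close> by (simp add: succ_prob_def succ_state_uniform_test trace_scaleR trace_sum field_simps)
qed

lemma sum_rejected_mass_uniform_test:
  fixes \<rho> :: "complex^'n^'n" and T :: nat
  assumes meas: "\<And>i. i < m \<Longrightarrow> is_measurement (E i)" and "m > 0"
  defines "Y \<equiv> succ_state E (uniform_test m T) \<rho>"
    and "F \<equiv> conj_avg (\<lambda>i. psd_sqrt (E i)) m"
  shows "(\<Sum>j<m. Re (trace Y) - Re (trace (E j ** Y)))
    = real m / real T * (Re (trace \<rho>) - Re (trace ((F ^^ T) \<rho>)))"
proof -
  define P where "P t = Re (trace ((F ^^ t) \<rho>))" for t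
  have Y: "Y = (1 / real T) *\<^sub>R (\<Sum>t<T. (F ^^ t) \<rho>)"
    by (simp add: Y_def F_def succ_state_uniform_test)
  have "psd_sqrt (E j) ** psd_sqrt (E j) = E j" if "j < m" for j
    using psd_sqrt(2)[OF measurement_psd[OF meas[OF that]]] .
  then have step: "(\<Sum>j<m. Re (trace (E j ** (F ^^ t) \<rho>))) = real m * P (Suc t)" for t
    using \<open>m > 0\<close> by (simp add: P_def F_def Re_trace_conj_avg)
  have "(\<Sum>j<m. Re (trace (E j ** Y))) = (\<Sum>j<m. \<Sum>t<T. Re (trace (E j ** (F ^^ t) \<rho>))) / real T"
    by (simp add: Y matrix_mult_scaleR_right matrix_sum_ldistrib trace_scaleR trace_sum sum_divide_distrib)
  also have "\<dots> = (\<Sum>t<T. \<Sum>j<m. Re (trace (E j ** (F ^^ t) \<rho>))) / real T"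
    by (subst sum.swap) (rule refl)
  also have "\<dots> = real m * (\<Sum>t<T. P (Suc t)) / real T"
    by (simp add: step sum_distrib_left)
  finally have "(\<Sum>j<m. Re (trace Y) - Re (trace (E j ** Y)))
      = real m * (\<Sum>t<T. P t) / real T - real m * (\<Sum>t<T. P (Suc t)) / real T"
    by (simp add: sum_subtractf Y P_def trace_scaleR trace_sum)
  also have "\<dots> = real m / real T * (\<Sum>t<T. P t - P (Suc t))"
    by (simp add: sum_subtractf right_diff_distrib diff_divide_distrib)
  also have "\<dots> = real m / real T * (P 0 - P T)"
    by (simp add: sum_lessThan_telescope')
  finally show ?thesis
    by (simp add: P_def)
qed

lemma uniform_test_rejection_le:
  fixes T :: nat
  assumes meas: "\<And>i. i < m \<Longrightarrow> is_measurement (E i)" and "m > 0" and "density \<rho>" and "i < m"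
  defines "Y \<equiv> succ_state E (uniform_test m T) \<rho>"
  shows "nonneg_form Y" and "Re (trace Y) - Re (trace (E i ** Y)) \<le> real m / real T"
proof -
  let ?F = "conj_avg (\<lambda>i. psd_sqrt (E i)) m"
  have "hermitian (psd_sqrt (E j))" if "j < m" for j
    using measurement_psd_sqrt[OF meas[OF that]] by (simp add: is_measurement_def)
  moreover have "nonneg_form \<rho>"
    using \<open>density \<rho>\<close> by (simp add: density_def psd_nonneg_form)
  ultimately have nonneg: "nonneg_form ((?F ^^ t) \<rho>)" for t
    by (induction t) (simp_all add: nonneg_form_conj_avg)
  then show "nonneg_form Y"
    unfolding Y_def succ_state_uniform_test by (intro nonneg_form_scaleR nonneg_form_sum) simp_all
  have "(\<Sum>j<m. Re (trace Y) - Re (trace (E j ** Y)))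
      = real m / real T * (Re (trace \<rho>) - Re (trace ((?F ^^ T) \<rho>)))"
    unfolding Y_def by (rule sum_rejected_mass_uniform_test[OF meas \<open>m > 0\<close>])
  also have "\<dots> \<le> real m / real T"
    using \<open>density \<rho>\<close> nonneg_form_Re_trace[OF nonneg[of T]]
    by (intro mult_left_le) (simp_all add: density_def)
  finally have "(\<Sum>j<m. Re (trace Y) - Re (trace (E j ** Y))) \<le> real m / real T" .
  moreover have "0 \<le> Re (trace Y) - Re (trace (E j ** Y))" if "j < m" for j
    using Re_trace_mult_nonneg[OF measurement_psd_complement[OF meas[OF that]] \<open>nonneg_form Y\<close>]
    by (simp add: matrix_diff_rdistrib trace_sub)
  ultimately show "Re (trace Y) - Re (trace (E i ** Y)) \<le> real m / real T"
    using member_le_sum[of i "{..<m}" "\<lambda>j. Re (trace Y) - Re (trace (E j ** Y))"] \<open>i < m\<close> by simp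
qed

lemma one_minus_two_sqrt_le:
  fixes x a :: real
  assumes "0 \<le> x" and "0 \<le> a" and "1 - x \<le> a"
  shows "1 - 2 * sqrt x \<le> a"
proof (cases "x \<le> 1")
  case True
  then have "sqrt x * sqrt x \<le> sqrt x * 1"
    using \<open>0 \<le> x\<close> by (intro mult_left_mono) simp_all
  then show ?thesis
    using assms by simp
next
  case False
  then show ?thesis
    using assms real_sqrt_ge_one[of x] by linarith
qed

lemma uniform_test_soundness:
  assumes meas: "\<And>i. i < m \<Longrightarrow> is_measurement (E i)" and "m > 0" and "T > 0" and "density \<rho>"
    and "lam > 0" and "lam \<le> succ_prob E (uniform_test m T) \<rho>" and "i < m"
  shows "1 - 2 * sqrt (real m / (lam * real T)) \<le> acc_prob (E i) (out_state E (uniform_test m T) \<rho>)"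
proof -
  define Y where "Y = succ_state E (uniform_test m T) \<rho>"
  define s where "s = Re (trace Y)"
  have "nonneg_form Y" and rejection: "s - Re (trace (E i ** Y)) \<le> real m / real T"
    using uniform_test_rejection_le[OF meas \<open>m > 0\<close> \<open>density \<rho>\<close> \<open>i < m\<close>] by (simp_all add: Y_def s_def)
  have "lam \<le> s"
    using assms(6) by (simp add: s_def Y_def succ_prob_def)
  have acc: "acc_prob (E i) (out_state E (uniform_test m T) \<rho>) = Re (trace (E i ** Y)) / s"
    by (simp add: acc_prob_def out_state_def succ_prob_def matrix_mult_scaleR_right trace_scaleR
        flip: Y_def s_def)
  have "1 - real m / (lam * real T) \<le> 1 - real m / (s * real T)"
    using \<open>lam \<le> s\<close> \<open>lam > 0\<close> \<open>T > 0\<close> by (intro diff_left_mono divide_left_mono mult_right_mono) auto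
  also have "\<dots> \<le> Re (trace (E i ** Y)) / s"
    using rejection \<open>lam \<le> s\<close> \<open>lam > 0\<close> by (simp add: field_simps)
  finally have "1 - real m / (lam * real T) \<le> Re (trace (E i ** Y)) / s" .
  moreover have "0 \<le> Re (trace (E i ** Y)) / s"
    using Re_trace_mult_nonneg[OF measurement_psd[OF meas[OF \<open>i < m\<close>]] \<open>nonneg_form Y\<close>] \<open>lam \<le> s\<close> \<open>lam > 0\<close>
    by simp
  ultimately show ?thesis
    unfolding acc using \<open>lam > 0\<close> by (intro one_minus_two_sqrt_le) simp_all
qed

theorem lemma22:
  fixes E :: "nat \<Rightarrow> complex^'n^'n" and m T :: nat
  assumes "\<forall>i<m. is_measurement (E i)"
    and "T > 0"
  shows "\<exists>Q. valid_test m T Q \<and>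
     (\<forall>\<rho>0 \<epsilon>. density \<rho>0 \<and> \<epsilon> \<ge> 0 \<and> (\<forall>i<m. acc_prob (E i) \<rho>0 \<ge> 1 - \<epsilon>)
        \<longrightarrow> succ_prob E Q \<rho>0 \<ge> 1 - real T * sqrt \<epsilon>) \<and>
     (\<forall>\<rho>0 lam. density \<rho>0 \<and> lam > 0 \<and> succ_prob E Q \<rho>0 \<ge> lam
        \<longrightarrow> (\<forall>i<m. acc_prob (E i) (out_state E Q \<rho>0) \<ge> 1 - 2 * sqrt (real m / (lam * real T))))"
proof (cases "m = 0")
  case True
  then show ?thesis
    by (intro exI[of _ "[(1, Success)]"]) (auto simp: valid_test_def succ_prob_def succ_state_def density_def)
next
  case False
  then have "m > 0"
    by simp
  moreover have meas: "\<And>i. i < m \<Longrightarrow> is_measurement (E i)"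
    using assms(1) by blast
  ultimately show ?thesis
    using valid_uniform_test[OF _ \<open>T > 0\<close>] uniform_test_completeness[where E = E, OF meas _ \<open>T > 0\<close>]
      uniform_test_soundness[where E = E, OF meas _ \<open>T > 0\<close>]
    by (intro exI[of _ "uniform_test m T"]) auto
qed

end
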